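(* Let $\rho_1$ be a ray of $C_{6,2}$ of type $(3,3)$ with labeling $O_1=\{J_1,J_2\}$ and $\rho_2$ a ray of type $(2,2,2)$ with labeling $O_2=\{I_1,I_2,I_3\}$, and let $\tau$ be the 2-face of $C_{6,2}$ spanned by $\rho_1$ and $\rho_2$. If $O_2\preccurlyeq O_1$, then $\tau\subseteq\Phi(\mathcal Z_2^6)$. Otherwise $\tau\cap\Phi(\mathcal Z_2^6)=\rho_1\cup\rho_2$.
   Context: $\mathcal Z_2$ is the set of zonoids in $\mathbb R^2$. For $Z=(Z_1,\dots,Z_6)\in\mathcal Z_2^6$ let $\mathrm V_{ij}=\mathrm V(Z_i,Z_j)$ be the mixed area, and $\Phi(Z)\in\mathbb R^{15}$ the vector with coordinates $\mathrm V_{I_1}\mathrm V_{I_2}\mathrm V_{I_3}$ indexed by all partitions of $[6]$ into pairs. $C_{6,2}$ is the conic hull of $\Phi(\mathcal Z_2^6)$ (a polyhedral cone in which any two extreme rays span a 2-face). For a 6-tuple $U$ of nonzero vectors in $\mathbb R^2$, $\Phi(U)=\Phi([0,u_1],\dots,[0,u_6])$. A ray of type $(3,3)$ with labeling $\{J_1,J_2\}$ is the ray spanned by $\Phi(U)$, where $[6]=J_1\sqcup J_2$, $|J_1|=|J_2|=3$, the vectors indexed by $J_1$ are pairwise parallel, those indexed by $J_2$ are pairwise parallel, and vectors from different parts are non-parallel. A ray of type $(2,2,2)$ with labeling $\{I_1,I_2,I_3\}$ is the ray spanned by $\Phi(U)$ where $[6]=I_1\sqcup I_2\sqcup I_3$,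 $|I_r|=2$, vectors in the same part are parallel and vectors in different parts are non-parallel. We write $O_2\preccurlyeq O_1$ if $I_i\subseteq J_j$ for some $i\in\{1,2,3\}$ and $j\in\{1,2\}$. *)

theory Defs
  imports "HOL-Analysis.Analysis"
begin

type_synonym vec2 = "real^2"

definition minksum :: "vec2 set \<Rightarrow> vec2 set \<Rightarrow> vec2 set" where
  "minksum A B = {a + b | a b. a \<in> A \<and> b \<in> B}"

definition zonotope :: "vec2 set \<Rightarrow> bool" where
  "zonotope P \<longleftrightarrow> (\<exists>segs :: (vec2 \<times> vec2) list.
      P = foldr (\<lambda>s acc. minksum (closed_segment (fst s) (snd s)) acc) segs {0})"

definition hausdist :: "vec2 set \<Rightarrow> vec2 set \<Rightarrow> real" where
  "hausdist S T = max (SUP x\<in>S. infdist x T) (SUP y\<in>T. infdist y S)"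

definition zonoid :: "vec2 set \<Rightarrow> bool" where
  "zonoid Z \<longleftrightarrow> compact Z \<and> Z \<noteq> {} \<and>
     (\<exists>P :: nat \<Rightarrow> vec2 set. (\<forall>n. zonotope (P n)) \<and> (\<lambda>n. hausdist (P n) Z) \<longlonglongrightarrow> 0)"

definition area :: "vec2 set \<Rightarrow> real" where
  "area K = measure lebesgue K"

text \<open>Mixed area, normalized so that mixed_area K K = area K.\<close>
definition mixed_area :: "vec2 set \<Rightarrow> vec2 set \<Rightarrow> real" where
  "mixed_area K L = (area (minksum K L) - area K - area L) / 2"

definition pairings6 :: "nat set set set" where
  "pairings6 = {P. \<Union>P = {1..6} \<and> (\<forall>B\<in>P. card B = 2) \<and>
                    (\<forall>B\<in>P. \<forall>C\<in>P. B \<noteq> C \<longrightarrow> B \<inter> C = {})}"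

text \<open>The map Phi, with coordinates indexed by pairings of [6] (value 0 off the index set).\<close>
definition Phi :: "(nat \<Rightarrow> vec2 set) \<Rightarrow> nat set set \<Rightarrow> real" where
  "Phi Z P = (if P \<in> pairings6 then (\<Prod>B\<in>P. mixed_area (Z (Min B)) (Z (Max B))) else 0)"

definition PhiU :: "(nat \<Rightarrow> vec2) \<Rightarrow> nat set set \<Rightarrow> real" where
  "PhiU U = Phi (\<lambda>i. closed_segment 0 (U i))"

definition Phi_image :: "(nat set set \<Rightarrow> real) set" where
  "Phi_image = {Phi Z | Z. \<forall>i\<in>{1..6::nat}. zonoid (Z i)}"

definition parallel :: "vec2 \<Rightarrow> vec2 \<Rightarrow> bool" where
  "parallel u v \<longleftrightarrow> (\<exists>c. u = c *\<^sub>R v)"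

definition type33 :: "(nat \<Rightarrow> vec2) \<Rightarrow> nat set \<Rightarrow> nat set \<Rightarrow> bool" where
  "type33 U J1 J2 \<longleftrightarrow> (\<forall>i\<in>{1..6}. U i \<noteq> 0) \<and>
     J1 \<union> J2 = {1..6} \<and> J1 \<inter> J2 = {} \<and> card J1 = 3 \<and> card J2 = 3 \<and>
     (\<forall>J\<in>{J1, J2}. \<forall>i\<in>J. \<forall>j\<in>J. parallel (U i) (U j)) \<and>
     (\<forall>i\<in>J1. \<forall>j\<in>J2. \<not> parallel (U i) (U j))"

definition type222 :: "(nat \<Rightarrow> vec2) \<Rightarrow> nat set \<Rightarrow> nat set \<Rightarrow> nat set \<Rightarrow> bool" where
  "type222 U I1 I2 I3 \<longleftrightarrow> (\<forall>i\<in>{1..6}. U i \<noteq> 0) \<and>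
     I1 \<union> I2 \<union> I3 = {1..6} \<and> I1 \<inter> I2 = {} \<and> I1 \<inter> I3 = {} \<and> I2 \<inter> I3 = {} \<and>
     card I1 = 2 \<and> card I2 = 2 \<and> card I3 = 2 \<and>
     (\<forall>I\<in>{I1, I2, I3}. \<forall>i\<in>I. \<forall>j\<in>I. parallel (U i) (U j)) \<and>
     (\<forall>I\<in>{I1, I2, I3}. \<forall>I'\<in>{I1, I2, I3}. I \<noteq> I' \<longrightarrow>
        (\<forall>i\<in>I. \<forall>j\<in>I'. \<not> parallel (U i) (U j)))"

definition labeling_prec :: "nat set \<Rightarrow> nat set \<Rightarrow> nat set \<Rightarrow> nat set \<Rightarrow> nat set \<Rightarrow> bool" where
  "labeling_prec I1 I2 I3 J1 J2 \<longleftrightarrow> (\<exists>I\<in>{I1, I2, I3}. \<exists>J\<in>{J1, J2}. I \<subseteq> J)"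

definition ray_of :: "(nat set set \<Rightarrow> real) \<Rightarrow> (nat set set \<Rightarrow> real) set" where
  "ray_of x = {(\<lambda>P. a * x P) | a. a \<ge> 0}"

definition cone2 :: "(nat set set \<Rightarrow> real) \<Rightarrow> (nat set set \<Rightarrow> real) \<Rightarrow> (nat set set \<Rightarrow> real) set" where
  "cone2 x y = {(\<lambda>P. a * x P + b * y P) | a b. a \<ge> 0 \<and> b \<ge> 0}"

end

theory Submission
  imports Defs
begin

(*
  Phi Z at a pairing is the product of the mixed areas of its blocks, and for segments [0, u_i]
  the mixed area of a block {i, j} is |det (u_i, u_j)| / 2.  Hence the support of Phi Z is closed
  under recombining blocks: if every block of a pairing Q occurs in some pairing of the support,
  Q is in the support.

  If no I_r lies inside a J_s, then I_r = {p_r, q_r} with p_r in J_1 and q_r in J_2.  For a, b > 0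
  the support of a Phi(U1) + b Phi(U2) is the union of the supports of Phi(U1) and Phi(U2); it
  contains pairings with blocks {p1,q1},{p2,q2},{p3,q3} and {p1,p2},{q2,p3},{q1,q3} and
  {p1,p3},{p2,q3},{q1,q2}, but not their recombination {p1,p2},{p3,q3},{q1,q2}.  So only the two
  rays meet the image, and they do because Phi is homogeneous of degree 6 in the segments.

  If some I_r lies inside some J_s, every point of the face is Phi of six explicit segments.
*)

definition det2 :: "vec2 \<Rightarrow> vec2 \<Rightarrow> real" where
  "det2 u v = u$1 * v$2 - u$2 * v$1"

lemma det2_scaleR_left [simp]: "det2 (a *\<^sub>R u) v = a * det2 u v"
  unfolding det2_def by (simp add: algebra_simps)

lemma det2_scaleR_right [simp]: "det2 u (b *\<^sub>R v) = b * det2 u v"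
  unfolding det2_def by (simp add: algebra_simps)

lemma abs_det2_scaleR: "\<bar>det2 (r *\<^sub>R u) (r *\<^sub>R v)\<bar> = r\<^sup>2 * \<bar>det2 u v\<bar>"
  by (simp add: abs_mult mult.assoc[symmetric] abs_mult_self_eq power2_eq_square)

lemma det2_vector [simp]: "det2 (vector [a, b]) (vector [c, d]) = a * d - b * c"
  unfolding det2_def by simp

lemma det2_self [simp]: "det2 u u = 0"
  unfolding det2_def by simp

lemma abs_det2_commute: "\<bar>det2 u v\<bar> = \<bar>det2 v u\<bar>"
  unfolding det2_def by (simp add: abs_minus_commute mult.commute)

lemma abs_det2_min_max: "\<bar>det2 (U (min i j)) (U (max i j))\<bar> = \<bar>det2 (U i) (U j)\<bar>"
  by (cases "i \<le> j") (simp_all add: min_def max_def abs_det2_commute)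

lemma det2_eq_0_if_parallel: "parallel u v \<Longrightarrow> det2 u v = 0"
  unfolding parallel_def det2_def by (auto simp: algebra_simps)

lemma parallel_if_det2_eq_0:
  assumes "det2 u v = 0" "v \<noteq> 0"
  shows "parallel u v"
proof -
  have "v$1 \<noteq> 0 \<or> v$2 \<noteq> 0" using assms(2) by (auto simp: vec_eq_iff forall_2)
  then have "u = (u$1 / v$1) *\<^sub>R v \<or> u = (u$2 / v$2) *\<^sub>R v"
    using assms(1) unfolding det2_def by (auto simp: vec_eq_iff forall_2 field_simps)
  then show ?thesis unfolding parallel_def by blast
qed

lemma parallel_commute:
  assumes "parallel u v" "u \<noteq> 0"
  shows "parallel v u"
proof -
  obtain c where c: "u = c *\<^sub>R v" using assms(1) unfolding parallel_def by blast
  with assms(2) have "c \<noteq> 0" by auto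
  with c have "v = inverse c *\<^sub>R u" by simp
  then show ?thesis unfolding parallel_def by blast
qed

lemma minksum_segments:
  "minksum (closed_segment 0 u) (closed_segment 0 v) =
     (\<lambda>x::real^2. x$1 *\<^sub>R u + x$2 *\<^sub>R v) ` cbox 0 1"
proof (intro set_eqI iffI)
  fix z assume "z \<in> minksum (closed_segment 0 u) (closed_segment 0 v)"
  then obtain s t where st: "0 \<le> s" "s \<le> 1" "0 \<le> t" "t \<le> 1" "z = s *\<^sub>R u + t *\<^sub>R v"
    unfolding minksum_def closed_segment_def by auto
  have "vector [s, t] \<in> cbox (0::real^2) 1"
    using st by (auto simp: mem_box_cart forall_2)
  then show "z \<in> (\<lambda>x::real^2. x$1 *\<^sub>R u + x$2 *\<^sub>R v) ` cbox 0 1"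
    using st by (intro image_eqI[where x = "vector [s, t]"]) auto
next
  fix z assume "z \<in> (\<lambda>x::real^2. x$1 *\<^sub>R u + x$2 *\<^sub>R v) ` cbox 0 1"
  then obtain x :: "real^2" where x: "x \<in> cbox 0 1" "z = x$1 *\<^sub>R u + x$2 *\<^sub>R v" by auto
  have "0 \<le> x$1" "x$1 \<le> 1" "0 \<le> x$2" "x$2 \<le> 1" using x(1) by (auto simp: mem_box_cart)
  then show "z \<in> minksum (closed_segment 0 u) (closed_segment 0 v)"
    unfolding minksum_def closed_segment_def using x(2) by auto
qed

lemma area_parallelogram:
  "area (minksum (closed_segment 0 u) (closed_segment 0 v)) = \<bar>det2 u v\<bar>"
proof -
  let ?f = "\<lambda>x::real^2. x$1 *\<^sub>R u + x$2 *\<^sub>R v"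
  have lin: "linear ?f" by (intro linearI) (auto simp: algebra_simps)
  have "measure lebesgue (?f ` cbox 0 1) = \<bar>det (matrix ?f)\<bar> * measure lebesgue (cbox (0::real^2) 1)"
    by (rule measure_lebesgue_linear_transformation) (auto simp: lin)
  also have "measure lebesgue (cbox (0::real^2) 1) = 1"
    using Cart_1 by (metis content_unit measure_completion sets_lborel closed_cbox borel_closed)
  also have "det (matrix ?f) = det2 u v"
    by (simp add: det_2 matrix_def det2_def axis_def)
  finally show ?thesis unfolding area_def minksum_segments by simp
qed

lemma area_segment: "area (closed_segment 0 u) = 0"
proof -
  have "minksum (closed_segment 0 u) (closed_segment 0 0) = closed_segment 0 u"
    unfolding minksum_def by auto
  then show ?thesis using area_parallelogram[of u 0] by (simp add: det2_def)
qed

lemma mixed_area_segments: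
  "mixed_area (closed_segment 0 u) (closed_segment 0 v) = \<bar>det2 u v\<bar> / 2"
  unfolding mixed_area_def by (simp add: area_parallelogram area_segment)

lemma zonoid_segment: "zonoid (closed_segment 0 u)"
proof -
  have "zonotope (closed_segment 0 u)"
    unfolding zonotope_def by (rule exI[of _ "[(0, u)]"]) (auto simp: minksum_def)
  moreover have "hausdist (closed_segment 0 u) (closed_segment 0 u) = 0"
    unfolding hausdist_def by (simp add: infdist_zero)
  ultimately show ?thesis
    unfolding zonoid_def by (intro conjI exI[of _ "\<lambda>n. closed_segment 0 u"]) auto
qed

definition perfect_matchings :: "'a set \<Rightarrow> 'a set set set" where
  "perfect_matchings S = {P. \<Union>P = S \<and> (\<forall>B\<in>P. card B = 2) \<and> disjoint P}"

lemma pairings6_eq_perfect_matchings: "pairings6 = perfect_matchings {1..6}"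
  unfolding pairings6_def perfect_matchings_def disjoint_def ..

lemma perfect_matchings_empty [simp]: "perfect_matchings {} = {{}}"
proof -
  have "P = {}" if "\<Union>P = {}" "\<forall>B\<in>P. card B = 2" for P :: "'a set set"
    using that by (metis Union_empty_conv card.empty ex_in_conv zero_neq_numeral)
  then show ?thesis unfolding perfect_matchings_def by auto
qed

lemma perfect_matchings_insert:
  assumes "a \<notin> S"
  shows "perfect_matchings (insert a S) =
           (\<Union>b\<in>S. insert {a, b} ` perfect_matchings (S - {b}))"
proof (intro equalityI subsetI)
  fix P assume "P \<in> perfect_matchings (insert a S)"
  then have P: "\<Union>P = insert a S" "\<And>B. B \<in> P \<Longrightarrow> card B = 2" "disjoint P"
    unfolding perfect_matchings_def by auto
  then obtain B where B: "B \<in> P" "a \<in> B" by blast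
  then obtain b where b: "B = {a, b}" "b \<noteq> a"
    using P(2)[OF B(1)] by (metis card_2_iff doubleton_eq_iff insertE singletonD)
  have "b \<in> S" using B b P(1) by blast
  have "\<Union>(P - {B}) = \<Union>P - B"
    using diff_Union_pairwise_disjoint[OF P(3), of "{B}"] B(1) by simp
  also have "\<dots> = S - {b}"
    using P(1) b assms by auto
  finally have "P - {B} \<in> perfect_matchings (S - {b})"
    using P unfolding perfect_matchings_def by (simp add: pairwise_subset[of _ P])
  moreover have "P = insert {a, b} (P - {B})" using B b by blast
  ultimately show "P \<in> (\<Union>b\<in>S. insert {a, b} ` perfect_matchings (S - {b}))"
    using \<open>b \<in> S\<close> by blast
next
  fix P assume "P \<in> (\<Union>b\<in>S. insert {a, b} ` perfect_matchings (S - {b}))"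
  then obtain b Q where "b \<in> S" "P = insert {a, b} Q" and "Q \<in> perfect_matchings (S - {b})"
    by blast
  moreover have "a \<noteq> b" using \<open>b \<in> S\<close> assms by blast
  ultimately show "P \<in> perfect_matchings (insert a S)"
    using assms unfolding perfect_matchings_def disjoint_def by auto
qed

lemma perfect_matchings_2:
  "a \<noteq> b \<Longrightarrow> perfect_matchings {a, b} = {{{a, b}}}"
  by (simp add: perfect_matchings_insert)

lemma mem_perfect_matchings_6:
  assumes "distinct [a, b, c, d, e, f]"
  shows "P \<in> perfect_matchings {a, b, c, d, e, f} \<longleftrightarrow>
    P = {{a, b}, {c, d}, {e, f}} \<or> P = {{a, b}, {c, e}, {d, f}} \<or> P = {{a, b}, {c, f}, {d, e}} \<or>
    P = {{a, c}, {b, d}, {e, f}} \<or> P = {{a, c}, {b, e}, {d, f}} \<or> P = {{a, c}, {b, f}, {d, e}} \<or>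
    P = {{a, d}, {b, c}, {e, f}} \<or> P = {{a, d}, {b, e}, {c, f}} \<or> P = {{a, d}, {b, f}, {c, e}} \<or>
    P = {{a, e}, {b, c}, {d, f}} \<or> P = {{a, e}, {b, d}, {c, f}} \<or> P = {{a, e}, {b, f}, {c, d}} \<or>
    P = {{a, f}, {b, c}, {d, e}} \<or> P = {{a, f}, {b, d}, {c, e}} \<or> P = {{a, f}, {b, e}, {c, d}}"
proof -
  have "b \<noteq> c" "b \<noteq> d" "b \<noteq> e" "b \<noteq> f" "c \<noteq> b" "c \<noteq> d" "c \<noteq> e" "c \<noteq> f"
    "d \<noteq> b" "d \<noteq> c" "d \<noteq> e" "d \<noteq> f" "e \<noteq> b" "e \<noteq> c" "e \<noteq> d" "e \<noteq> f"
    "f \<noteq> b" "f \<noteq> c" "f \<noteq> d" "f \<noteq> e"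
    using assms by auto
  with assms show ?thesis
    by (simp add: perfect_matchings_insert perfect_matchings_2 insert_Diff_if disj_comms)
qed

lemma card_perfect_matching:
  assumes "finite S" "P \<in> perfect_matchings S"
  shows "2 * card P = card S"
proof -
  have P: "\<Union>P = S" "\<And>B. B \<in> P \<Longrightarrow> card B = 2" "disjoint P"
    using assms(2) unfolding perfect_matchings_def by auto
  have "card S = (\<Sum>B\<in>P. card B)"
    using card_Union_disjoint[OF P(3)] P(1,2) by (metis card.infinite zero_neq_numeral)
  also have "\<dots> = (\<Sum>B\<in>P. 2)"
    using P(2) by (rule sum.cong[OF refl])
  finally show ?thesis by simp
qed

lemma card_pairing: "P \<in> pairings6 \<Longrightarrow> card P = 3"
  using card_perfect_matching[of "{1..6::nat}" P]
  by (simp add: pairings6_eq_perfect_matchings)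

lemma finite_pairing: "P \<in> pairings6 \<Longrightarrow> finite P"
  using card_pairing by (metis card.infinite zero_neq_numeral)

lemma triple_in_pairings6_iff:
  "{{a, b}, {c, d}, {e, f}} \<in> pairings6 \<longleftrightarrow>
     distinct [a, b, c, d, e, f] \<and> {a, b, c, d, e, f} = {1..6}"
proof
  assume P: "{{a, b}, {c, d}, {e, f}} \<in> pairings6"
  then have "\<Union>{{a, b}, {c, d}, {e, f}} = {1..6}"
    unfolding pairings6_def mem_Collect_eq by (rule conjunct1)
  then have cover: "{a, b, c, d, e, f} = {1..6}"
    by (simp add: insert_commute)
  have "card (set [a, b, c, d, e, f]) = length [a, b, c, d, e, f]"
    using cover by simp
  then show "distinct [a, b, c, d, e, f] \<and> {a, b, c, d, e, f} = {1..6}"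
    using card_distinct cover by blast
next
  assume "distinct [a, b, c, d, e, f] \<and> {a, b, c, d, e, f} = {1..6}"
  then show "{{a, b}, {c, d}, {e, f}} \<in> pairings6"
    unfolding pairings6_eq_perfect_matchings by (metis mem_perfect_matchings_6)
qed

lemma PhiU_eq_prod:
  "P \<in> pairings6 \<Longrightarrow> PhiU U P = (\<Prod>B\<in>P. \<bar>det2 (U (Min B)) (U (Max B))\<bar> / 2)"
  unfolding PhiU_def Phi_def by (simp add: mixed_area_segments)

lemma PhiU_triple:
  assumes "{{a, b}, {c, d}, {e, f}} \<in> pairings6"
  shows "PhiU U {{a, b}, {c, d}, {e, f}} =
           \<bar>det2 (U a) (U b)\<bar> / 2 * (\<bar>det2 (U c) (U d)\<bar> / 2) * (\<bar>det2 (U e) (U f)\<bar> / 2)"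
proof -
  have "distinct [a, b, c, d, e, f]"
    using assms triple_in_pairings6_iff by blast
  then have "{a, b} \<notin> {{c, d}, {e, f}}" "{c, d} \<noteq> {e, f}"
    by (auto simp: doubleton_eq_iff)
  then show ?thesis
    by (simp add: PhiU_eq_prod[OF assms] abs_det2_min_max)
qed

lemma PhiU_nonneg: "PhiU U P \<ge> 0"
  unfolding PhiU_def Phi_def by (simp add: mixed_area_segments prod_nonneg)

lemma PhiU_scaleR: "PhiU (\<lambda>i. r *\<^sub>R U i) = (\<lambda>P. r ^ 6 * PhiU U P)"
proof
  fix P
  show "PhiU (\<lambda>i. r *\<^sub>R U i) P = r ^ 6 * PhiU U P"
  proof (cases "P \<in> pairings6")
    case True
    have "PhiU (\<lambda>i. r *\<^sub>R U i) P = (\<Prod>B\<in>P. r\<^sup>2 * (\<bar>det2 (U (Min B)) (U (Max B))\<bar> / 2))"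
      by (simp add: PhiU_eq_prod[OF True] abs_det2_scaleR del: det2_scaleR_left det2_scaleR_right)
    also have "\<dots> = (r\<^sup>2) ^ card P * PhiU U P"
      unfolding prod.distrib by (simp add: PhiU_eq_prod[OF True])
    finally show ?thesis
      using card_pairing[OF True] by (simp flip: power_mult)
  qed (simp add: PhiU_def Phi_def)
qed

lemma PhiU_in_Phi_image: "PhiU U \<in> Phi_image"
  unfolding Phi_image_def PhiU_def using zonoid_segment by blast

lemma ray_of_PhiU_subset_Phi_image: "ray_of (PhiU U) \<subseteq> Phi_image"
proof
  fix z assume "z \<in> ray_of (PhiU U)"
  then obtain t where "t \<ge> 0" "z = (\<lambda>P. t * PhiU U P)"
    unfolding ray_of_def by auto
  then have "z = PhiU (\<lambda>i. root 6 t *\<^sub>R U i)"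
    by (simp add: PhiU_scaleR)
  then show "z \<in> Phi_image"
    using PhiU_in_Phi_image by simp
qed

lemma Phi_neq_0_if_blocks_supported:
  assumes "Q \<in> pairings6"
    and supp: "\<And>B. B \<in> Q \<Longrightarrow> \<exists>P\<in>pairings6. B \<in> P \<and> Phi Z P \<noteq> 0"
  shows "Phi Z Q \<noteq> 0"
proof -
  define g where "g B = mixed_area (Z (Min B)) (Z (Max B))" for B
  have Phi_eq: "Phi Z P = prod g P" if "P \<in> pairings6" for P
    using that unfolding Phi_def g_def by simp
  have "g B \<noteq> 0" if B: "B \<in> Q" for B
  proof -
    obtain P where "P \<in> pairings6" "B \<in> P" "prod g P \<noteq> 0"
      using supp[OF B] Phi_eq by metis
    then show ?thesis using finite_pairing by auto
  qed
  then show ?thesis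
    using assms(1) Phi_eq finite_pairing by auto
qed

lemma Phi_neq_0_recombined:
  assumes "{{p1, p2}, {p3, q3}, {q1, q2}} \<in> pairings6"
    and P1: "{{p1, q1}, {p2, q2}, {p3, q3}} \<in> pairings6" "Phi Z {{p1, q1}, {p2, q2}, {p3, q3}} \<noteq> 0"
    and P2: "{{p1, p2}, {q2, p3}, {q1, q3}} \<in> pairings6" "Phi Z {{p1, p2}, {q2, p3}, {q1, q3}} \<noteq> 0"
    and P3: "{{p1, p3}, {p2, q3}, {q1, q2}} \<in> pairings6" "Phi Z {{p1, p3}, {p2, q3}, {q1, q2}} \<noteq> 0"
  shows "Phi Z {{p1, p2}, {p3, q3}, {q1, q2}} \<noteq> 0"
proof (rule Phi_neq_0_if_blocks_supported[OF assms(1)])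
  fix B assume "B \<in> {{p1, p2}, {p3, q3}, {q1, q2}}"
  then have "B = {p1, p2} \<or> B = {p3, q3} \<or> B = {q1, q2}"
    by simp
  then show "\<exists>P\<in>pairings6. B \<in> P \<and> Phi Z P \<noteq> 0"
  proof (elim disjE)
    assume "B = {p1, p2}"
    then show ?thesis by (intro bexI[OF _ P2(1)]) (simp add: P2(2))
  next
    assume "B = {p3, q3}"
    then show ?thesis by (intro bexI[OF _ P1(1)]) (simp add: P1(2))
  next
    assume "B = {q1, q2}"
    then show ?thesis by (intro bexI[OF _ P3(1)]) (simp add: P3(2))
  qed
qed

lemma weighted_sum_neq_0:
  fixes a b x y :: real
  assumes "0 < a" "0 < b" "0 \<le> x" "0 \<le> y" "x \<noteq> 0 \<or> y \<noteq> 0"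
  shows "a * x + b * y \<noteq> 0"
  using assms by (simp add: add_nonneg_eq_0_iff)

lemma cone2_Int_eq_rays:
  assumes "ray_of x \<subseteq> S" "ray_of y \<subseteq> S"
    and interior: "\<And>a b. 0 < a \<Longrightarrow> 0 < b \<Longrightarrow> (\<lambda>P. a * x P + b * y P) \<notin> S"
  shows "cone2 x y \<inter> S = ray_of x \<union> ray_of y"
proof
  show "cone2 x y \<inter> S \<subseteq> ray_of x \<union> ray_of y"
  proof
    fix z assume z: "z \<in> cone2 x y \<inter> S"
    then obtain a b where ab: "0 \<le> a" "0 \<le> b" and z_eq: "z = (\<lambda>P. a * x P + b * y P)"
      unfolding cone2_def by blast
    have "a = 0 \<or> b = 0"
      using interior[of a b] ab z z_eq by force
    then show "z \<in> ray_of x \<union> ray_of y"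
      using ab z_eq unfolding ray_of_def by auto
  qed
next
  have "ray_of x \<subseteq> cone2 x y" "ray_of y \<subseteq> cone2 x y"
    unfolding ray_of_def cone2_def by force+
  with assms(1,2) show "ray_of x \<union> ray_of y \<subseteq> cone2 x y \<inter> S"
    by auto
qed

lemma type33_partition:
  "type33 U J1 J2 \<Longrightarrow> J1 \<union> J2 = {1..6} \<and> J1 \<inter> J2 = {} \<and> card J1 = 3 \<and> card J2 = 3"
  unfolding type33_def by simp

lemma type222_partition:
  "type222 U I1 I2 I3 \<Longrightarrow> I1 \<union> I2 \<union> I3 = {1..6} \<and> I1 \<inter> I2 = {} \<and> I1 \<inter> I3 = {} \<and>
     I2 \<inter> I3 = {} \<and> card I1 = 2 \<and> card I2 = 2 \<and> card I3 = 2"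
  unfolding type222_def by simp

lemma type33_parallel:
  "type33 U J1 J2 \<Longrightarrow> J \<in> {J1, J2} \<Longrightarrow> i \<in> J \<Longrightarrow> j \<in> J \<Longrightarrow> parallel (U i) (U j)"
  unfolding type33_def by blast

lemma type222_parallel:
  "type222 U I1 I2 I3 \<Longrightarrow> I \<in> {I1, I2, I3} \<Longrightarrow> i \<in> I \<Longrightarrow> j \<in> I \<Longrightarrow> parallel (U i) (U j)"
  unfolding type222_def by blast

lemma type33_det2_eq_0:
  "type33 U J1 J2 \<Longrightarrow> J \<in> {J1, J2} \<Longrightarrow> i \<in> J \<Longrightarrow> j \<in> J \<Longrightarrow> det2 (U i) (U j) = 0"
  by (rule det2_eq_0_if_parallel) (rule type33_parallel)

lemma type222_det2_eq_0:
  "type222 U I1 I2 I3 \<Longrightarrow> I \<in> {I1, I2, I3} \<Longrightarrow> i \<in> I \<Longrightarrow> j \<in> I \<Longrightarrow> det2 (U i) (U j) = 0"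
  by (rule det2_eq_0_if_parallel) (rule type222_parallel)

lemma type33_det2_neq_0:
  assumes "type33 U J1 J2" "i \<in> J1" "j \<in> J2"
  shows "det2 (U i) (U j) \<noteq> 0"
proof -
  have "j \<in> {1..6}" "\<forall>i\<in>{1..6}. U i \<noteq> 0" "\<not> parallel (U i) (U j)"
    using assms unfolding type33_def by auto
  then show ?thesis using parallel_if_det2_eq_0 by blast
qed

lemma type222_det2_neq_0:
  assumes "type222 U I1 I2 I3" "I \<in> {I1, I2, I3}" "I' \<in> {I1, I2, I3}" "i \<in> I" "j \<in> I'" "i \<notin> I'"
  shows "det2 (U i) (U j) \<noteq> 0"
proof -
  have "I1 \<union> I2 \<union> I3 = {1..6}" "\<forall>i\<in>{1..6}. U i \<noteq> 0"
    and np: "\<forall>I\<in>{I1, I2, I3}. \<forall>I'\<in>{I1, I2, I3}. I \<noteq> I' \<longrightarrow>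
        (\<forall>i\<in>I. \<forall>j\<in>I'. \<not> parallel (U i) (U j))"
    using assms(1) unfolding type222_def by simp_all
  moreover have "I \<noteq> I'"
    using assms(4,6) by blast
  with np assms(2-5) have "\<not> parallel (U i) (U j)"
    by blast
  moreover have "j \<in> I1 \<union> I2 \<union> I3"
    using assms(3,5) by blast
  ultimately show ?thesis using parallel_if_det2_eq_0 by metis
qed

lemma type33_swap:
  assumes "type33 U J1 J2"
  shows "type33 U J2 J1"
proof -
  have nz: "\<forall>i\<in>{1..6}. U i \<noteq> 0" and cover: "J1 \<union> J2 = {1..6}"
    and np: "\<forall>i\<in>J1. \<forall>j\<in>J2. \<not> parallel (U i) (U j)"
    using assms unfolding type33_def by simp_all
  have "\<not> parallel (U i) (U j)" if "i \<in> J2" "j \<in> J1" for i j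
  proof
    assume "parallel (U i) (U j)"
    moreover have "U i \<noteq> 0" using nz cover that by blast
    ultimately have "parallel (U j) (U i)" by (rule parallel_commute)
    with np that show False by blast
  qed
  with assms show ?thesis
    unfolding type33_def by (simp add: Un_commute Int_commute insert_commute)
qed

lemma type222_swap12:
  assumes "type222 U I1 I2 I3"
  shows "type222 U I2 I1 I3"
proof -
  have "{I2, I1, I3} = {I1, I2, I3}" "I2 \<union> I1 = I1 \<union> I2" "I2 \<inter> I1 = I1 \<inter> I2"
    by blast+
  with assms show ?thesis
    unfolding type222_def by (simp only: simp_thms) (elim conjE, intro conjI; assumption)
qed

lemma type222_swap23:
  assumes "type222 U I1 I2 I3"
  shows "type222 U I1 I3 I2"
proof -
  have "{I1, I3, I2} = {I1, I2, I3}" "I1 \<union> I3 \<union> I2 = I1 \<union> I2 \<union> I3" "I3 \<inter> I2 = I2 \<inter> I3"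
    by blast+
  with assms show ?thesis
    unfolding type222_def by (simp only: simp_thms) (elim conjE, intro conjI; assumption)
qed

lemma card2_subset_Un_cases:
  assumes "card I = 2" "I \<subseteq> A \<union> B" "\<not> I \<subseteq> A" "\<not> I \<subseteq> B"
  obtains p q where "p \<in> A" "q \<in> B" "I = {p, q}"
proof -
  obtain p q where pq: "p \<in> I" "p \<notin> B" "q \<in> I" "q \<notin> A"
    using assms(3,4) by blast
  then have "p \<in> A" "q \<in> B" "p \<noteq> q" using assms(2) by auto
  moreover have "I = {p, q}"
  proof (rule card_subset_eq[symmetric])
    show "finite I" using assms(1) by (metis card.infinite zero_neq_numeral)
    show "{p, q} \<subseteq> I" using pq by blast
    show "card {p, q} = card I" using assms(1) \<open>p \<noteq> q\<close> by simp
  qed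
  ultimately show ?thesis using that by blast
qed

lemma crossing_labels:
  assumes U1: "type33 U1 J1 J2" and U2: "type222 U2 I1 I2 I3"
    and nprec: "\<not> labeling_prec I1 I2 I3 J1 J2"
  obtains p1 q1 p2 q2 p3 q3 where "I1 = {p1, q1}" "I2 = {p2, q2}" "I3 = {p3, q3}"
    "p1 \<in> J1" "p2 \<in> J1" "p3 \<in> J1" "q1 \<in> J2" "q2 \<in> J2" "q3 \<in> J2"
    "distinct [p1, q1, p2, q2, p3, q3]" "{p1, q1, p2, q2, p3, q3} = {1..6}"
proof -
  have J: "J1 \<union> J2 = {1..6}" "J1 \<inter> J2 = {}"
    and I: "I1 \<union> I2 \<union> I3 = {1..6}" "I1 \<inter> I2 = {}" "I1 \<inter> I3 = {}" "I2 \<inter> I3 = {}"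
    using type33_partition[OF U1] type222_partition[OF U2] by simp_all
  have crossing: "\<exists>p\<in>J1. \<exists>q\<in>J2. I = {p, q}" if I: "I \<in> {I1, I2, I3}" for I
  proof -
    have "card I = 2" "I \<subseteq> J1 \<union> J2"
      using I type33_partition[OF U1] type222_partition[OF U2] by auto
    moreover have "\<not> I \<subseteq> J1" "\<not> I \<subseteq> J2"
      using nprec I unfolding labeling_prec_def by auto
    ultimately obtain p q where "p \<in> J1" "q \<in> J2" "I = {p, q}"
      by (rule card2_subset_Un_cases)
    then show ?thesis by blast
  qed
  from crossing[of I1] obtain p1 q1 where p1: "p1 \<in> J1" "q1 \<in> J2" and I1: "I1 = {p1, q1}"
    by blast
  from crossing[of I2] obtain p2 q2 where p2: "p2 \<in> J1" "q2 \<in> J2" and I2: "I2 = {p2, q2}"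
    by blast
  from crossing[of I3] obtain p3 q3 where p3: "p3 \<in> J1" "q3 \<in> J2" and I3: "I3 = {p3, q3}"
    by blast
  have "distinct [p1, q1, p2, q2, p3, q3]"
    using I(2-4) J(2) p1 p2 p3 unfolding I1 I2 I3 by auto
  moreover have "{p1, q1, p2, q2, p3, q3} = {1..6}"
    using I(1) unfolding I1 I2 I3 by auto
  ultimately show ?thesis
    by (rule that[OF I1 I2 I3 p1(1) p2(1) p3(1) p1(2) p2(2) p3(2)])
qed

lemma crossing_pairings6:
  assumes dist: "distinct [p1, q1, p2, q2, p3, q3]" and cover: "{p1, q1, p2, q2, p3, q3} = {1..6}"
  shows "{{p1, q1}, {p2, q2}, {p3, q3}} \<in> pairings6" "{{p1, p2}, {q2, p3}, {q1, q3}} \<in> pairings6"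
    "{{p1, p3}, {p2, q3}, {q1, q2}} \<in> pairings6" "{{p1, p2}, {p3, q3}, {q1, q2}} \<in> pairings6"
proof -
  have triple: "{{a, b}, {c, d}, {e, f}} \<in> pairings6"
    if "{a, b, c, d, e, f} = {p1, q1, p2, q2, p3, q3}" "distinct [a, b, c, d, e, f]" for a b c d e f
    using that cover by (simp add: triple_in_pairings6_iff)
  show "{{p1, q1}, {p2, q2}, {p3, q3}} \<in> pairings6" "{{p1, p2}, {q2, p3}, {q1, q3}} \<in> pairings6"
    "{{p1, p3}, {p2, q3}, {q1, q2}} \<in> pairings6" "{{p1, p2}, {p3, q3}, {q1, q2}} \<in> pairings6"
    using dist by (auto intro!: triple)
qed

lemma crossing_combination_notin_Phi_image:
  assumes U1: "type33 U1 J1 J2" and U2: "type222 U2 I1 I2 I3"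
    and nprec: "\<not> labeling_prec I1 I2 I3 J1 J2" and "0 < a" "0 < b"
  shows "(\<lambda>P. a * PhiU U1 P + b * PhiU U2 P) \<notin> Phi_image"
proof
  assume "(\<lambda>P. a * PhiU U1 P + b * PhiU U2 P) \<in> Phi_image"
  then obtain Z where "Phi Z = (\<lambda>P. a * PhiU U1 P + b * PhiU U2 P)"
    unfolding Phi_image_def by auto
  then have Z: "\<And>P. Phi Z P = a * PhiU U1 P + b * PhiU U2 P"
    by simp
  have supported: "Phi Z P \<noteq> 0" if "PhiU U1 P \<noteq> 0 \<or> PhiU U2 P \<noteq> 0" for P
    unfolding Z by (intro weighted_sum_neq_0 \<open>0 < a\<close> \<open>0 < b\<close> PhiU_nonneg that)
  obtain p1 q1 p2 q2 p3 q3 where I: "I1 = {p1, q1}" "I2 = {p2, q2}" "I3 = {p3, q3}"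
    and J: "p1 \<in> J1" "p2 \<in> J1" "p3 \<in> J1" "q1 \<in> J2" "q2 \<in> J2" "q3 \<in> J2"
    and dist: "distinct [p1, q1, p2, q2, p3, q3]" and cover: "{p1, q1, p2, q2, p3, q3} = {1..6}"
    using crossing_labels[OF U1 U2 nprec] .
  note P = crossing_pairings6[OF dist cover]
  have "Phi Z {{p1, q1}, {p2, q2}, {p3, q3}} \<noteq> 0"
    using type33_det2_neq_0[OF U1, of p1 q1] type33_det2_neq_0[OF U1, of p2 q2]
      type33_det2_neq_0[OF U1, of p3 q3] J
    by (intro supported disjI1) (simp add: PhiU_triple[OF P(1)])
  moreover have "Phi Z {{p1, p2}, {q2, p3}, {q1, q3}} \<noteq> 0"
    using type222_det2_neq_0[OF U2, of I1 I2 p1 p2] type222_det2_neq_0[OF U2, of I2 I3 q2 p3]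
      type222_det2_neq_0[OF U2, of I1 I3 q1 q3] dist
    by (intro supported disjI2) (simp add: PhiU_triple[OF P(2)] I)
  moreover have "Phi Z {{p1, p3}, {p2, q3}, {q1, q2}} \<noteq> 0"
    using type222_det2_neq_0[OF U2, of I1 I3 p1 p3] type222_det2_neq_0[OF U2, of I2 I3 p2 q3]
      type222_det2_neq_0[OF U2, of I1 I2 q1 q2] dist
    by (intro supported disjI2) (simp add: PhiU_triple[OF P(3)] I)
  ultimately have "Phi Z {{p1, p2}, {p3, q3}, {q1, q2}} \<noteq> 0"
    using Phi_neq_0_recombined P by blast
  moreover have "PhiU U1 {{p1, p2}, {p3, q3}, {q1, q2}} = 0"
    using type33_det2_eq_0[OF U1, of J1 p1 p2] J by (simp add: PhiU_triple[OF P(4)])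
  moreover have "PhiU U2 {{p1, p2}, {p3, q3}, {q1, q2}} = 0"
    using type222_det2_eq_0[OF U2, of I3 p3 q3] I by (simp add: PhiU_triple[OF P(4)])
  ultimately show False
    using Z by simp
qed

lemma card_2_containsE:
  assumes "card I = 2" "k \<in> I"
  obtains m where "I = {k, m}" "k \<noteq> m"
proof -
  obtain x y where "I = {x, y}" "x \<noteq> y"
    using assms(1) unfolding card_2_iff by blast
  with assms(2) have "I = {k, if k = x then y else x} \<and> k \<noteq> (if k = x then y else x)"
    by auto
  then show ?thesis
    using that by blast
qed

lemma card_3_supersetE:
  assumes "card A = 2" "card K = 3" "A \<subseteq> K"
  obtains k where "K = insert k A" "k \<notin> A"
proof -
  have "finite A"
    using assms(1) by (metis card.infinite zero_neq_numeral)
  then have "card (K - A) = 1"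
    using card_Diff_subset[OF _ assms(3)] assms(1,2) by simp
  then obtain k where "K - A = {k}"
    by (rule card_1_singletonE)
  then have "K = insert k A" "k \<notin> A"
    using assms(3) by blast+
  then show ?thesis
    by (rule that)
qed

lemma nested_labels:
  assumes U1: "type33 U1 J1 J2" and U2: "type222 U2 I1 I2 I3" and "I1 \<subseteq> J1" "I3 \<subseteq> J2"
  obtains j1 j2 k m n1 n2
  where "J1 = {j1, j2, k}" "J2 = {m, n1, n2}" "I1 = {j1, j2}" "I2 = {k, m}" "I3 = {n1, n2}"
proof -
  have J: "J1 \<union> J2 = {1..6}" "J1 \<inter> J2 = {}" "card J1 = 3"
    and I: "I1 \<union> I2 \<union> I3 = {1..6}" "I1 \<inter> I2 = {}" "card I1 = 2" "card I2 = 2" "card I3 = 2"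
    using type33_partition[OF U1] type222_partition[OF U2] by simp_all
  obtain j1 j2 where I1: "I1 = {j1, j2}"
    using I(3) unfolding card_2_iff by blast
  obtain n1 n2 where I3: "I3 = {n1, n2}"
    using I(5) unfolding card_2_iff by blast
  obtain k where "J1 = insert k I1" "k \<notin> I1"
    using card_3_supersetE[OF I(3) J(3) \<open>I1 \<subseteq> J1\<close>] .
  then have J1: "J1 = {j1, j2, k}" and "k \<in> J1"
    using I1 by auto
  have "k \<in> I1 \<union> I2 \<union> I3"
    unfolding I(1) J(1)[symmetric] using \<open>k \<in> J1\<close> by blast
  moreover have "k \<notin> I3"
    using \<open>k \<in> J1\<close> \<open>I3 \<subseteq> J2\<close> J(2) by blast
  ultimately obtain m where I2: "I2 = {k, m}" "k \<noteq> m"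
    using card_2_containsE[OF I(4)] \<open>k \<notin> I1\<close> by blast
  have "J2 = {1..6} - J1"
    using J(1,2) by blast
  also have "\<dots> = {j1, j2, k, m, n1, n2} - {j1, j2, k}"
    unfolding I(1)[symmetric] I1 I2 I3 J1 by auto
  also have "\<dots> = {m, n1, n2}"
  proof -
    have "m \<notin> {j1, j2, k}"
      using I1 I2 I(2) by blast
    moreover have "n1 \<notin> {j1, j2, k}" "n2 \<notin> {j1, j2, k}"
      using I3 \<open>I3 \<subseteq> J2\<close> J(2) unfolding J1[symmetric] by blast+
    ultimately show ?thesis
      by (simp add: insert_Diff_if)
  qed
  finally show ?thesis
    using that J1 I1 I2 I3 by blast
qed

lemma nested_combination_eq_PhiU:
  assumes dist: "distinct [j1, j2, k, m, n1, n2]" and cover: "{j1, j2, k, m, n1, n2} = {1..6}"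
    and w: "U1 j2 = w2 *\<^sub>R U1 j1" "U1 k = w3 *\<^sub>R U1 j1" "U1 n1 = w5 *\<^sub>R U1 m" "U1 n2 = w6 *\<^sub>R U1 m"
    and v: "U2 j2 = v2 *\<^sub>R U2 j1" "U2 m = v4 *\<^sub>R U2 k" "U2 n2 = v6 *\<^sub>R U2 n1"
    and "0 \<le> a" "0 \<le> b"
  obtains W where "(\<lambda>P. a * PhiU U1 P + b * PhiU U2 P) = PhiU W"
proof -
  define A where "A = a * (\<bar>w2 * w3 * w5 * w6\<bar> * \<bar>det2 (U1 j1) (U1 m)\<bar> ^ 3 / 8)"
  define B where "B = b * (\<bar>v2 * v4 * v6\<bar> * \<bar>det2 (U2 j1) (U2 k)\<bar> * \<bar>det2 (U2 j1) (U2 n1)\<bar>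
                             * \<bar>det2 (U2 k) (U2 n1)\<bar> / 8)"
  have "0 \<le> A" "0 \<le> B"
    unfolding A_def B_def using \<open>0 \<le> a\<close> \<open>0 \<le> b\<close> by simp_all
  \<comment> \<open>a PhiU U1 equals A on its support and b PhiU U2 equals B on its support. W m is
     chosen so that the blocks {k, m} and {m, n}, n \<in> {n1, n2}, have determinants 8 A and 8 B;
     then PhiU W is A, B or A + B on the pairings supported by U1 only, by U2 only, or by both.\<close>
  define W where "W i = (if i \<in> {j1, j2} then vector [1, 0] else if i \<in> {n1, n2} then vector [0, 1]
      else if i = k then vector [1, 1] else (vector [8 * B, 8 * (A + B)] :: real^2))" for i
  have W: "W j1 = vector [1, 0]" "W j2 = vector [1, 0]" "W k = vector [1, 1]"
    "W m = vector [8 * B, 8 * (A + B)]" "W n1 = vector [0, 1]" "W n2 = vector [0, 1]"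
    unfolding W_def using dist by auto
  have "(\<lambda>P. a * PhiU U1 P + b * PhiU U2 P) = PhiU W"
  proof
    fix P
    show "a * PhiU U1 P + b * PhiU U2 P = PhiU W P"
    proof (cases "P \<in> pairings6")
      case True
      then have "P \<in> perfect_matchings {j1, j2, k, m, n1, n2}"
        unfolding pairings6_eq_perfect_matchings cover .
      with True show ?thesis
        unfolding mem_perfect_matchings_6[OF dist]
        by (elim disjE; hypsubst; simp add: PhiU_triple w v W abs_mult \<open>0 \<le> A\<close> \<open>0 \<le> B\<close>;
            simp add: A_def B_def abs_mult algebra_simps power3_eq_cube)
    qed (simp add: PhiU_def Phi_def)
  qed
  then show ?thesis
    by (rule that)
qed

lemma nested_combination_in_Phi_image:
  assumes U1: "type33 U1 {j1, j2, k} {m, n1, n2}" and U2: "type222 U2 {j1, j2} {k, m} {n1, n2}"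
    and "0 \<le> a" "0 \<le> b"
  shows "(\<lambda>P. a * PhiU U1 P + b * PhiU U2 P) \<in> Phi_image"
proof -
  have dist: "distinct [j1, j2, k, m, n1, n2]"
    using type222_partition[OF U2] by auto
  have cover: "{j1, j2, k, m, n1, n2} = {1..6}"
    using type33_partition[OF U1] by (simp add: insert_commute)
  obtain w2 w3 w5 w6 where w: "U1 j2 = w2 *\<^sub>R U1 j1" "U1 k = w3 *\<^sub>R U1 j1"
    "U1 n1 = w5 *\<^sub>R U1 m" "U1 n2 = w6 *\<^sub>R U1 m"
    using type33_parallel[OF U1, of "{j1, j2, k}" j2 j1] type33_parallel[OF U1, of "{j1, j2, k}" k j1]
      type33_parallel[OF U1, of "{m, n1, n2}" n1 m] type33_parallel[OF U1, of "{m, n1, n2}" n2 m]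
    unfolding parallel_def by auto
  obtain v2 v4 v6 where v: "U2 j2 = v2 *\<^sub>R U2 j1" "U2 m = v4 *\<^sub>R U2 k" "U2 n2 = v6 *\<^sub>R U2 n1"
    using type222_parallel[OF U2, of "{j1, j2}" j2 j1] type222_parallel[OF U2, of "{k, m}" m k]
      type222_parallel[OF U2, of "{n1, n2}" n2 n1]
    unfolding parallel_def by auto
  obtain W where "(\<lambda>P. a * PhiU U1 P + b * PhiU U2 P) = PhiU W"
    using nested_combination_eq_PhiU[OF dist cover w v \<open>0 \<le> a\<close> \<open>0 \<le> b\<close>] .
  then show ?thesis
    using PhiU_in_Phi_image by simp
qed

lemma nested_cone2_subset_Phi_image:
  assumes U1: "type33 U1 J1 J2" and U2: "type222 U2 I1 I2 I3" and "I1 \<subseteq> J1" "I3 \<subseteq> J2"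
  shows "cone2 (PhiU U1) (PhiU U2) \<subseteq> Phi_image"
proof
  fix z assume "z \<in> cone2 (PhiU U1) (PhiU U2)"
  then obtain a b where "0 \<le> a" "0 \<le> b" "z = (\<lambda>P. a * PhiU U1 P + b * PhiU U2 P)"
    unfolding cone2_def by blast
  moreover obtain j1 j2 k m n1 n2
    where "J1 = {j1, j2, k}" "J2 = {m, n1, n2}" "I1 = {j1, j2}" "I2 = {k, m}" "I3 = {n1, n2}"
    using nested_labels[OF assms] .
  ultimately show "z \<in> Phi_image"
    using nested_combination_in_Phi_image U1 U2 by blast
qed

lemma nested_other_block_subset:
  assumes U1: "type33 U1 K L" and U2: "type222 U2 A B C" and "A \<subseteq> K"
  shows "B \<subseteq> L \<or> C \<subseteq> L"
proof (rule ccontr)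
  have KL: "K \<union> L = {1..6}" "card K = 3"
    and ABC: "A \<union> B \<union> C = {1..6}" "A \<inter> B = {}" "A \<inter> C = {}" "B \<inter> C = {}" "card A = 2"
    using type33_partition[OF U1] type222_partition[OF U2] by simp_all
  assume "\<not> (B \<subseteq> L \<or> C \<subseteq> L)"
  then obtain x y where "x \<in> B" "x \<notin> L" "y \<in> C" "y \<notin> L"
    by blast
  moreover have "x \<in> K \<union> L" "y \<in> K \<union> L"
    unfolding KL(1) ABC(1)[symmetric] using \<open>x \<in> B\<close> \<open>y \<in> C\<close> by blast+
  ultimately have "x \<in> K" "y \<in> K" by blast+
  have "x \<notin> A" "y \<notin> A" "x \<noteq> y"
    using \<open>x \<in> B\<close> \<open>y \<in> C\<close> ABC(2-4) by blast+
  have "finite A" "finite K"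
    using ABC(5) KL(2) by (metis card.infinite zero_neq_numeral)+
  have "card (insert x (insert y A)) = 4"
    using \<open>finite A\<close> \<open>x \<notin> A\<close> \<open>y \<notin> A\<close> \<open>x \<noteq> y\<close> ABC(5) by simp
  moreover have "insert x (insert y A) \<subseteq> K"
    using \<open>x \<in> K\<close> \<open>y \<in> K\<close> \<open>A \<subseteq> K\<close> by blast
  then have "card (insert x (insert y A)) \<le> card K"
    by (rule card_mono[OF \<open>finite K\<close>])
  ultimately show False
    using KL(2) by simp
qed

lemma labeling_prec_normal_form:
  assumes U1: "type33 U1 J1 J2" and U2: "type222 U2 I1 I2 I3" and "labeling_prec I1 I2 I3 J1 J2"
  obtains K L A B C where "type33 U1 K L" "type222 U2 A B C" "A \<subseteq> K" "C \<subseteq> L"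
proof -
  obtain I J where "I \<in> {I1, I2, I3}" "J \<in> {J1, J2}" "I \<subseteq> J"
    using assms(3) unfolding labeling_prec_def by blast
  moreover have "type33 U1 J1 J2" "type33 U1 J2 J1"
    using U1 type33_swap by blast+
  moreover have "type222 U2 I1 I2 I3" "type222 U2 I2 I1 I3" "type222 U2 I3 I1 I2"
    using U2 type222_swap12 type222_swap12[OF type222_swap23[OF U2]] by blast+
  ultimately obtain K L A B C where KL: "type33 U1 K L" and ABC: "type222 U2 A B C" and "A \<subseteq> K"
    by blast
  then consider "C \<subseteq> L" | "B \<subseteq> L"
    using nested_other_block_subset by blast
  then show ?thesis
  proof cases
    case 1
    with KL ABC \<open>A \<subseteq> K\<close> show ?thesis by (rule that)
  next
    case 2
    with KL type222_swap23[OF ABC] \<open>A \<subseteq> K\<close> show ?thesis by (rule that)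
  qed
qed

theorem proposition7p6:
  fixes U1 U2 :: "nat \<Rightarrow> real^2" and J1 J2 I1 I2 I3 :: "nat set"
  assumes "type33 U1 J1 J2"
    and "type222 U2 I1 I2 I3"
  shows "(labeling_prec I1 I2 I3 J1 J2 \<longrightarrow> cone2 (PhiU U1) (PhiU U2) \<subseteq> Phi_image)
       \<and> (\<not> labeling_prec I1 I2 I3 J1 J2 \<longrightarrow>
            cone2 (PhiU U1) (PhiU U2) \<inter> Phi_image = ray_of (PhiU U1) \<union> ray_of (PhiU U2))"
proof (intro conjI impI)
  assume "labeling_prec I1 I2 I3 J1 J2"
  then obtain K L A B C where "type33 U1 K L" "type222 U2 A B C" "A \<subseteq> K" "C \<subseteq> L"
    using labeling_prec_normal_form[OF assms] by metis
  then show "cone2 (PhiU U1) (PhiU U2) \<subseteq> Phi_image"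
    by (rule nested_cone2_subset_Phi_image)
next
  assume "\<not> labeling_prec I1 I2 I3 J1 J2"
  then show "cone2 (PhiU U1) (PhiU U2) \<inter> Phi_image = ray_of (PhiU U1) \<union> ray_of (PhiU U2)"
    using crossing_combination_notin_Phi_image[OF assms]
    by (intro cone2_Int_eq_rays ray_of_PhiU_subset_Phi_image) blast
qed

end
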